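(* Let $\widetilde{\mathcal{A}}^+,\widetilde{\mathcal{A}}^-\subseteq\mathbb{R}^d$. If the problem $$\max_{\|y\|_*\le1,\ b\in\mathbb{R}} h(y,b;\widetilde{\mathcal{A}}^+,\widetilde{\mathcal{A}}^-)$$ has an optimal solution and a positive optimal value, then every optimal solution $(\hat y,\hat b)$ satisfies $\|\hat y\|_*=1$. If moreover the norm $\|\cdot\|$ and its dual $\|\cdot\|_*$ are both strictly convex (i.e. $\|\beta w+(1-\beta)z\|<\beta\|w\|+(1-\beta)\|z\|$ whenever $\beta\in(0,1)$ and $w,z$ are not collinear, and likewise for $\|\cdot\|_*$), then the optimal solution is unique.
   Context: $\|\cdot\|$ is a norm on $\mathbb{R}^d$ with dual norm $\|y\|_*=\max_{\|w\|\le1}y^\top w$. For sets $\widetilde{\mathcal{A}}^+,\widetilde{\mathcal{A}}^-\subseteq\mathbb{R}^d$ the margin function is $$h(y,b;\widetilde{\mathcal{A}}^+,\widetilde{\mathcal{A}}^-)=\min\Big\{\min_{x\in\widetilde{\mathcal{A}}^+}(y^\top x+b),\ \min_{x\in\widetilde{\mathcal{A}}^-}(-y^\top x-b)\Big\},$$ which equals $\tfrac12\big(\min_{x\in\widetilde{\mathcal{A}}^+}y^\top x-\max_{x\in\widetilde{\mathcal{A}}^-}y^\top x\big)-\big|b+\tfrac12\big(\min_{x\in\widetilde{\mathcal{A}}^+}y^\top x+\max_{x\in\widetilde{\mathcal{A}}^-}y^\top x\big)\big|$. *)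

theory Defs
  imports "HOL-Analysis.Analysis" "HOL-Library.Extended_Real"
begin

definition is_norm :: "(real^'d \<Rightarrow> real) \<Rightarrow> bool" where
  "is_norm N \<longleftrightarrow>
     (\<forall>x. N x = 0 \<longleftrightarrow> x = 0) \<and>
     (\<forall>c x. N (c *\<^sub>R x) = \<bar>c\<bar> * N x) \<and>
     (\<forall>x y. N (x + y) \<le> N x + N y)"

definition dual_norm :: "(real^'d \<Rightarrow> real) \<Rightarrow> real^'d \<Rightarrow> real" where
  "dual_norm N y = Sup {y \<bullet> w | w. N w \<le> 1}"

definition collinear_pair :: "real^'d \<Rightarrow> real^'d \<Rightarrow> bool" where
  "collinear_pair w z \<longleftrightarrow> (\<exists>c. w = c *\<^sub>R z) \<or> (\<exists>c. z = c *\<^sub>R w)"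

definition strictly_convex_norm :: "(real^'d \<Rightarrow> real) \<Rightarrow> bool" where
  "strictly_convex_norm N \<longleftrightarrow>
     (\<forall>\<beta> w z. 0 < \<beta> \<and> \<beta> < 1 \<and> \<not> collinear_pair w z \<longrightarrow>
        N (\<beta> *\<^sub>R w + (1 - \<beta>) *\<^sub>R z) < \<beta> * N w + (1 - \<beta>) * N z)"

text \<open>Margin function; minima over the sets are taken as infima in the extended reals.\<close>
definition margin :: "real^'d \<Rightarrow> real \<Rightarrow> (real^'d) set \<Rightarrow> (real^'d) set \<Rightarrow> ereal" where
  "margin y b Ap Am =
     min (Inf ((\<lambda>x. ereal (y \<bullet> x + b)) ` Ap))
         (Inf ((\<lambda>x. ereal (- (y \<bullet> x) - b)) ` Am))"

definition optimal_sol ::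
  "(real^'d \<Rightarrow> real) \<Rightarrow> (real^'d) set \<Rightarrow> (real^'d) set \<Rightarrow> real^'d \<Rightarrow> real \<Rightarrow> bool" where
  "optimal_sol N Ap Am y b \<longleftrightarrow>
     dual_norm N y \<le> 1 \<and>
     (\<forall>y' b'. dual_norm N y' \<le> 1 \<longrightarrow> margin y' b' Ap Am \<le> margin y b Ap Am)"

end

theory Submission imports Defs begin

text \<open>A maximal-margin solution with positive value must have dual norm 1: if its dual norm
  were t < 1, then rescaling (y, b) by 1/t stays feasible and multiplies the (positive) margin by
  1/t > 1. The margin is jointly concave in (y, b), so the midpoint of two optimal solutions is
  again optimal; strict convexity of the dual norm then forces the two y's to be collinear, hence
  equal (y and -y would average to 0, of dual norm 0 < 1). For equal y, averaging two different
  offsets b strictly increases the margin, so the offsets agree as well.\<close>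

lemma is_norm_scaleR: "is_norm N \<Longrightarrow> N (c *\<^sub>R x) = \<bar>c\<bar> * N x"
  unfolding is_norm_def by blast

lemma is_norm_triangle: "is_norm N \<Longrightarrow> N (x + y) \<le> N x + N y"
  unfolding is_norm_def by blast

lemma is_norm_zero: "is_norm N \<Longrightarrow> N 0 = 0"
  unfolding is_norm_def by blast

lemma is_norm_eq_0_iff: "is_norm N \<Longrightarrow> N x = 0 \<longleftrightarrow> x = 0"
  unfolding is_norm_def by blast

lemma is_norm_minus: "is_norm N \<Longrightarrow> N (- x) = N x"
  using is_norm_scaleR[of N "-1" x] by simp

lemma is_norm_nonneg: "is_norm N \<Longrightarrow> 0 \<le> N x"
  using is_norm_triangle[of N x "- x"] is_norm_minus[of N x] is_norm_zero[of N] by simp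

lemma is_norm_convex_on: "is_norm N \<Longrightarrow> convex_on UNIV N"
  by (rule convex_onI) (auto intro: order_trans[OF is_norm_triangle] simp: is_norm_scaleR)

lemma is_norm_ge_scaled_norm:
  fixes N :: "real^'d \<Rightarrow> real"
  assumes N: "is_norm N"
  obtains m where "0 < m" "\<And>x. m * norm x \<le> N x"
proof -
  have "continuous_on (sphere 0 1) N"
    using convex_on_continuous[OF open_UNIV is_norm_convex_on[OF N]] continuous_on_subset by blast
  moreover have "sphere (0 :: real^'d) 1 \<noteq> {}" by simp
  ultimately obtain x0 where x0: "x0 \<in> sphere 0 1" "\<And>x. x \<in> sphere 0 1 \<Longrightarrow> N x0 \<le> N x"
    using continuous_attains_inf[OF compact_sphere] by blast
  have "N x0 * norm x \<le> N x" for x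
  proof (cases "x = 0")
    case False
    then have "N x0 \<le> N ((1 / norm x) *\<^sub>R x)" by (intro x0(2)) simp
    also have "\<dots> = N x / norm x" by (simp add: is_norm_scaleR[OF N])
    finally show ?thesis using False by (simp add: field_simps)
  qed (simp add: is_norm_nonneg[OF N])
  moreover have "0 < N x0"
    using x0(1) is_norm_nonneg[OF N, of x0] is_norm_eq_0_iff[OF N, of x0] by fastforce
  ultimately show thesis using that by blast
qed

lemma bdd_above_dual_norm_set:
  fixes N :: "real^'d \<Rightarrow> real"
  assumes N: "is_norm N"
  shows "bdd_above {y \<bullet> w | w. N w \<le> 1}"
proof -
  obtain m where m: "0 < m" "\<And>x. m * norm x \<le> N x" using is_norm_ge_scaled_norm[OF N] by blast
  have "y \<bullet> w \<le> norm y / m" if "N w \<le> 1" for w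
  proof -
    have "m * norm w \<le> 1" using m(2)[of w] that by linarith
    then have "norm w \<le> 1 / m" using m(1) by (simp add: field_simps)
    then have "norm y * norm w \<le> norm y * (1 / m)" by (intro mult_left_mono) auto
    then show ?thesis using Cauchy_Schwarz_ineq2[of y w] by simp
  qed
  then show ?thesis unfolding bdd_above_def by blast
qed

lemma dual_norm_le_iff:
  assumes N: "is_norm N"
  shows "dual_norm N y \<le> t \<longleftrightarrow> (\<forall>w. N w \<le> 1 \<longrightarrow> y \<bullet> w \<le> t)"
proof -
  have "N 0 \<le> 1" using is_norm_zero[OF N] by simp
  then have "y \<bullet> 0 \<in> {y \<bullet> w | w. N w \<le> 1}" by blast
  then have "{y \<bullet> w | w. N w \<le> 1} \<noteq> {}" by blast
  then show ?thesis
    unfolding dual_norm_def using cSup_le_iff[OF _ bdd_above_dual_norm_set[OF N]] by blast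
qed

lemma inner_le_dual_norm: "is_norm N \<Longrightarrow> N w \<le> 1 \<Longrightarrow> y \<bullet> w \<le> dual_norm N y"
  unfolding dual_norm_def by (intro cSup_upper bdd_above_dual_norm_set) auto

lemma dual_norm_nonneg: "is_norm N \<Longrightarrow> 0 \<le> dual_norm N y"
  using inner_le_dual_norm[of N 0 y] is_norm_zero[of N] by simp

lemma dual_norm_scaleR_le:
  assumes N: "is_norm N"
  shows "dual_norm N (c *\<^sub>R y) \<le> \<bar>c\<bar> * dual_norm N y"
  unfolding dual_norm_le_iff[OF N]
proof safe
  fix w assume w: "N w \<le> 1"
  have "N (sgn c *\<^sub>R w) \<le> 1"
    using w is_norm_nonneg[OF N, of w] by (simp add: is_norm_scaleR[OF N] sgn_real_def)
  then have "y \<bullet> (sgn c *\<^sub>R w) \<le> dual_norm N y" by (rule inner_le_dual_norm[OF N])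
  then have "\<bar>c\<bar> * (y \<bullet> (sgn c *\<^sub>R w)) \<le> \<bar>c\<bar> * dual_norm N y" by (rule mult_left_mono) simp
  then show "c *\<^sub>R y \<bullet> w \<le> \<bar>c\<bar> * dual_norm N y" by (simp add: mult.assoc[symmetric] abs_mult_sgn)
qed

lemma dual_norm_scaleR:
  assumes N: "is_norm N"
  shows "dual_norm N (c *\<^sub>R y) = \<bar>c\<bar> * dual_norm N y"
proof (cases "c = 0")
  case True
  then show ?thesis
    using dual_norm_scaleR_le[OF N, of 0 y] dual_norm_nonneg[OF N, of 0] by simp
next
  case False
  have "dual_norm N y \<le> \<bar>inverse c\<bar> * dual_norm N (c *\<^sub>R y)"
    using dual_norm_scaleR_le[OF N, of "inverse c" "c *\<^sub>R y"] False by simp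
  then have "\<bar>c\<bar> * dual_norm N y \<le> dual_norm N (c *\<^sub>R y)"
    using False by (simp add: field_simps abs_inverse)
  then show ?thesis using dual_norm_scaleR_le[OF N, of c y] by linarith
qed

lemma dual_norm_pos:
  assumes N: "is_norm N" and "y \<noteq> 0"
  shows "0 < dual_norm N y"
proof -
  have Ny: "0 < N y" using assms is_norm_nonneg[OF N] is_norm_eq_0_iff[OF N] by (metis less_le)
  then have "N ((1 / N y) *\<^sub>R y) \<le> 1" by (simp add: is_norm_scaleR[OF N])
  then have "y \<bullet> ((1 / N y) *\<^sub>R y) \<le> dual_norm N y" by (rule inner_le_dual_norm[OF N])
  moreover have "0 < y \<bullet> ((1 / N y) *\<^sub>R y)" using Ny \<open>y \<noteq> 0\<close> by simp
  ultimately show ?thesis by linarith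
qed

lemma is_norm_dual_norm:
  assumes N: "is_norm N"
  shows "is_norm (dual_norm N)"
  unfolding is_norm_def
proof (intro conjI allI)
  fix y :: "real^'a"
  show "dual_norm N y = 0 \<longleftrightarrow> y = 0"
    using dual_norm_pos[OF N, of y] dual_norm_scaleR[OF N, of 0 y] by (cases "y = 0") auto
next
  fix y z :: "real^'a"
  have "(y + z) \<bullet> w \<le> dual_norm N y + dual_norm N z" if "N w \<le> 1" for w
    using inner_le_dual_norm[OF N that, of y] inner_le_dual_norm[OF N that, of z]
    by (simp add: inner_add_left)
  then show "dual_norm N (y + z) \<le> dual_norm N y + dual_norm N z"
    using dual_norm_le_iff[OF N] by blast
qed (rule dual_norm_scaleR[OF N])

lemma collinear_pair_eq_norm:
  assumes N: "is_norm N" and "collinear_pair w z" and "N w = N z" and "w \<noteq> 0"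
  shows "w = z \<or> w = - z"
proof -
  have Nw: "N w \<noteq> 0" using assms is_norm_eq_0_iff[OF N] by blast
  have sign: "c = 1 \<or> c = -1" if "\<bar>c\<bar> * N w = N w" for c :: real
  proof -
    have "\<bar>c\<bar> = 1" using that Nw by (simp add: mult_cancel_right2)
    then show ?thesis by linarith
  qed
  obtain c where "w = c *\<^sub>R z \<or> z = c *\<^sub>R w"
    using \<open>collinear_pair w z\<close> unfolding collinear_pair_def by blast
  then show ?thesis
  proof
    assume c: "w = c *\<^sub>R z"
    then have "\<bar>c\<bar> * N w = N w" using \<open>N w = N z\<close> is_norm_scaleR[OF N, of c z] by simp
    then show ?thesis using c by (elim sign[elim_format]) auto
  next
    assume c: "z = c *\<^sub>R w"
    then have "\<bar>c\<bar> * N w = N w" using \<open>N w = N z\<close> is_norm_scaleR[OF N, of c w] by simp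
    then show ?thesis using c by (elim sign[elim_format]) auto
  qed
qed

lemma strictly_convex_norm_midpoint:
  assumes "strictly_convex_norm N" and "\<not> collinear_pair w z"
  shows "N ((1/2) *\<^sub>R w + (1/2) *\<^sub>R z) < (1/2) * N w + (1/2) * N z"
  using assms unfolding strictly_convex_norm_def by (elim allE[of _ "1/2"]) auto

lemma ereal_le_margin_iff:
  "ereal M \<le> margin y b Ap Am \<longleftrightarrow> (\<forall>x\<in>Ap. M \<le> y \<bullet> x + b) \<and> (\<forall>x\<in>Am. M \<le> - (y \<bullet> x) - b)"
  by (simp add: margin_def le_Inf_iff)

lemma margin_neq_PInf: "x \<in> Ap \<Longrightarrow> margin y b Ap Am \<noteq> \<infinity>"
proof -
  assume "x \<in> Ap"
  then have "margin y b Ap Am \<le> ereal (y \<bullet> x + b)"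
    unfolding margin_def by (intro min.coboundedI1 INF_lower)
  then show ?thesis by auto
qed

lemma ereal_le_margin_scaleR:
  assumes "0 < c" and "ereal M \<le> margin y b Ap Am"
  shows "ereal (c * M) \<le> margin (c *\<^sub>R y) (c * b) Ap Am"
  unfolding ereal_le_margin_iff
proof safe
  fix x assume "x \<in> Ap"
  then have "c * M \<le> c * (y \<bullet> x + b)"
    using assms by (intro mult_left_mono) (auto simp: ereal_le_margin_iff)
  then show "c * M \<le> c *\<^sub>R y \<bullet> x + c * b" by (simp add: algebra_simps)
next
  fix x assume "x \<in> Am"
  then have "c * M \<le> c * (- (y \<bullet> x) - b)"
    using assms by (intro mult_left_mono) (auto simp: ereal_le_margin_iff)
  then show "c * M \<le> - (c *\<^sub>R y \<bullet> x) - c * b" by (simp add: algebra_simps)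
qed

lemma ereal_le_margin_convex:
  assumes "0 \<le> u" "u \<le> 1"
    and "ereal M \<le> margin y1 b1 Ap Am" and "ereal M \<le> margin y2 b2 Ap Am"
  shows "ereal M \<le> margin (u *\<^sub>R y1 + (1 - u) *\<^sub>R y2) (u * b1 + (1 - u) * b2) Ap Am"
  unfolding ereal_le_margin_iff
proof safe
  fix x assume "x \<in> Ap"
  then have "M \<le> y1 \<bullet> x + b1" "M \<le> y2 \<bullet> x + b2" using assms(3,4) by (auto simp: ereal_le_margin_iff)
  then have "u * M + (1 - u) * M \<le> u * (y1 \<bullet> x + b1) + (1 - u) * (y2 \<bullet> x + b2)"
    using assms(1,2) by (intro add_mono mult_left_mono) auto
  then show "M \<le> (u *\<^sub>R y1 + (1 - u) *\<^sub>R y2) \<bullet> x + (u * b1 + (1 - u) * b2)"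
    by (simp add: inner_add_left algebra_simps)
next
  fix x assume "x \<in> Am"
  then have "M \<le> - (y1 \<bullet> x) - b1" "M \<le> - (y2 \<bullet> x) - b2" using assms(3,4) by (auto simp: ereal_le_margin_iff)
  then have "u * M + (1 - u) * M \<le> u * (- (y1 \<bullet> x) - b1) + (1 - u) * (- (y2 \<bullet> x) - b2)"
    using assms(1,2) by (intro add_mono mult_left_mono) auto
  then show "M \<le> - ((u *\<^sub>R y1 + (1 - u) *\<^sub>R y2) \<bullet> x) - (u * b1 + (1 - u) * b2)"
    by (simp add: inner_add_left algebra_simps)
qed

lemma ereal_le_margin_midpoint_offset:
  assumes "b1 \<le> b2" and "ereal M \<le> margin y b1 Ap Am" and "ereal M \<le> margin y b2 Ap Am"
  shows "ereal (M + (b2 - b1) / 2) \<le> margin y ((b1 + b2) / 2) Ap Am"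
  using assms unfolding ereal_le_margin_iff by (auto simp: field_simps)

lemma max_margin_dual_norm_ge_1:
  assumes N: "is_norm N" and "xp \<in> Ap" and "xm \<in> Am" and "0 < M"
    and bound: "\<forall>y b. dual_norm N y \<le> 1 \<longrightarrow> margin y b Ap Am \<le> ereal M"
    and M: "ereal M \<le> margin y b Ap Am"
  shows "1 \<le> dual_norm N y"
proof (rule ccontr)
  assume "\<not> 1 \<le> dual_norm N y"
  then have t1: "dual_norm N y < 1" by simp
  show False
  proof (cases "y = 0")
    case True
    then have "M \<le> b" "M \<le> - b"
      using M \<open>xp \<in> Ap\<close> \<open>xm \<in> Am\<close> unfolding ereal_le_margin_iff by auto
    then show False using \<open>0 < M\<close> by linarith
  next
    case False
    define t where "t = dual_norm N y"
    have t: "0 < t" "t < 1" using dual_norm_pos[OF N False] t1 unfolding t_def by auto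
    have "dual_norm N ((1 / t) *\<^sub>R y) = 1" using t by (simp add: dual_norm_scaleR[OF N] t_def)
    then have "margin ((1 / t) *\<^sub>R y) ((1 / t) * b) Ap Am \<le> ereal M" using bound by simp
    with ereal_le_margin_scaleR[OF _ M, of "1 / t"] t have "ereal ((1 / t) * M) \<le> ereal M"
      by (meson order_trans divide_pos_pos zero_less_one)
    then have "M / t \<le> M" by simp
    moreover have "M < M / t" using t \<open>0 < M\<close> by (simp add: less_divide_eq)
    ultimately show False by linarith
  qed
qed

lemma max_margin_unique:
  assumes N: "is_norm N" and "xp \<in> Ap" and "xm \<in> Am" and "0 < M"
    and bound: "\<forall>y b. dual_norm N y \<le> 1 \<longrightarrow> margin y b Ap Am \<le> ereal M"
    and strict: "strictly_convex_norm (dual_norm N)"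
    and y1: "dual_norm N y1 \<le> 1" "ereal M \<le> margin y1 b1 Ap Am"
    and y2: "dual_norm N y2 \<le> 1" "ereal M \<le> margin y2 b2 Ap Am"
  shows "y1 = y2 \<and> b1 = b2"
proof -
  note ge_1 = max_margin_dual_norm_ge_1[OF N \<open>xp \<in> Ap\<close> \<open>xm \<in> Am\<close> \<open>0 < M\<close> bound]
  have d1: "dual_norm N y1 = 1" and d2: "dual_norm N y2 = 1" using ge_1 y1 y2 by force+
  define ym where "ym = (1/2) *\<^sub>R y1 + (1/2) *\<^sub>R y2"
  have ym: "ereal M \<le> margin ym ((1/2) * b1 + (1/2) * b2) Ap Am"
    using ereal_le_margin_convex[of "1/2" M y1 b1 Ap Am y2 b2] y1 y2 unfolding ym_def by simp
  then have ym_ge_1: "1 \<le> dual_norm N ym" using ge_1 by blast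
  have "collinear_pair y1 y2"
  proof (rule ccontr)
    assume "\<not> collinear_pair y1 y2"
    then have "dual_norm N ym < 1"
      using strictly_convex_norm_midpoint[OF strict, of y1 y2] d1 d2 unfolding ym_def by simp
    then show False using ym_ge_1 by simp
  qed
  then have "y1 = y2 \<or> y1 = - y2"
    using d1 d2 is_norm_zero[OF is_norm_dual_norm[OF N]]
    by (intro collinear_pair_eq_norm[OF is_norm_dual_norm[OF N]]) auto
  moreover have "y1 \<noteq> - y2"
  proof
    assume "y1 = - y2"
    then have "ym = 0" unfolding ym_def by simp
    then show False using ym_ge_1 is_norm_zero[OF is_norm_dual_norm[OF N]] by simp
  qed
  ultimately have yy: "y1 = y2" by blast
  have offsets_eq: "b = b'"
    if "b \<le> b'" "ereal M \<le> margin y1 b Ap Am" "ereal M \<le> margin y1 b' Ap Am" for b b'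
  proof -
    have "ereal (M + (b' - b) / 2) \<le> ereal M"
      using ereal_le_margin_midpoint_offset[OF that] bound y1(1) by (blast intro: order_trans)
    then show ?thesis using that(1) by simp
  qed
  have "b1 = b2"
    using offsets_eq[of b1 b2] offsets_eq[of b2 b1] y1(2) y2(2) yy by (cases "b1 \<le> b2") auto
  with yy show ?thesis by blast
qed

theorem mainTheorem4:
  fixes N :: "real^'d \<Rightarrow> real" and Ap Am :: "(real^'d) set"
  assumes "is_norm N"
    and "Ap \<noteq> {}" and "Am \<noteq> {}"
    and "\<exists>y0 b0. optimal_sol N Ap Am y0 b0 \<and> margin y0 b0 Ap Am > 0"
  shows "(\<forall>y b. optimal_sol N Ap Am y b \<longrightarrow> dual_norm N y = 1) \<and>
         (strictly_convex_norm N \<and> strictly_convex_norm (dual_norm N) \<longrightarrow>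
            (\<forall>y1 b1 y2 b2. optimal_sol N Ap Am y1 b1 \<and> optimal_sol N Ap Am y2 b2
                \<longrightarrow> y1 = y2 \<and> b1 = b2))"
proof -
  obtain xp xm where xp: "xp \<in> Ap" and xm: "xm \<in> Am" using assms(2,3) by blast
  obtain y0 b0 where opt0: "optimal_sol N Ap Am y0 b0" and "0 < margin y0 b0 Ap Am"
    using assms(4) by blast
  then obtain M where M: "margin y0 b0 Ap Am = ereal M" "0 < M"
    using margin_neq_PInf[OF xp] by (cases "margin y0 b0 Ap Am") auto
  have bound: "\<forall>y b. dual_norm N y \<le> 1 \<longrightarrow> margin y b Ap Am \<le> ereal M"
    using opt0 M(1) unfolding optimal_sol_def by metis
  have opt: "dual_norm N y \<le> 1 \<and> ereal M \<le> margin y b Ap Am" if "optimal_sol N Ap Am y b" for y b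
    using opt0 that M(1) unfolding optimal_sol_def by metis
  note ge_1 = max_margin_dual_norm_ge_1[OF assms(1) xp xm M(2) bound]
  note unique = max_margin_unique[OF assms(1) xp xm M(2) bound]
  have "dual_norm N y = 1" if "optimal_sol N Ap Am y b" for y b
    using opt[OF that] ge_1[of y b] by simp
  moreover have "y1 = y2 \<and> b1 = b2"
    if "strictly_convex_norm (dual_norm N)" "optimal_sol N Ap Am y1 b1" "optimal_sol N Ap Am y2 b2"
    for y1 b1 y2 b2
    using unique[OF that(1)] opt[OF that(2)] opt[OF that(3)] by blast
  ultimately show ?thesis by blast
qed

end
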